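(* Let $T(x)=1+\sum_{n\ge1}t_nx^n$ be the cluster generating function for the consecutive pattern $15243$ (defined in the context). Then $T$ satisfies \[x^3T'(x) = 1 + x - T\!\left(\frac{x}{1+x^2}\right),\] with $T(0)=1$.
   Context: For a consecutive pattern $\sigma$ of length $m$ (here $\sigma=15243$, $m=5$): an occurrence of $\sigma$ in a permutation is a block of $m$ consecutive positions whose entries are in the same relative order as $\sigma$. A $k$-cluster of length $n\ge m$ is a permutation of $\{1,\dots,n\}$ containing precisely $k$ occurrences of $\sigma$, such that every entry belongs to at least one occurrence and any two successive occurrences overlap in at least one position. Let $s_{n,k}$ be the number of $k$-clusters of length $n$, with $s_{1,0}=1$ and $s_{n,k}=0$ otherwise for $n<m$; set $t_n=\sum_k(-1)^ks_{n,k}$ and $T(x)=1+\sum_{n\ge1}t_nx^n$. *)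

theory Defs
  imports "HOL-Computational_Algebra.Formal_Power_Series"
begin

definition sigma :: "nat list" where "sigma = [1,5,2,4,3]"

definition occ :: "nat list \<Rightarrow> nat \<Rightarrow> bool" where
  "occ p i \<longleftrightarrow> i + length sigma \<le> length p \<and>
     (\<forall>a < length sigma. \<forall>b < length sigma. p ! (i + a) < p ! (i + b) \<longleftrightarrow> sigma ! a < sigma ! b)"

definition is_cluster :: "nat \<Rightarrow> nat list \<Rightarrow> nat set \<Rightarrow> bool" where
  "is_cluster n p S \<longleftrightarrow>
     distinct p \<and> set p = {1..n} \<and>
     (\<forall>i\<in>S. occ p i) \<and>
     (\<forall>j<n. \<exists>i\<in>S. i \<le> j \<and> j < i + length sigma) \<and>
     (\<forall>i\<in>S. \<forall>i'\<in>S. i < i' \<and> (\<forall>l\<in>S. \<not> (i < l \<and> l < i')) \<longrightarrow> i' < i + length sigma)"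

definition s :: "nat \<Rightarrow> nat \<Rightarrow> nat" where
  "s n k = (if n < length sigma then (if n = 1 \<and> k = 0 then 1 else 0)
            else card {(p, S). is_cluster n p S \<and> card S = k})"

definition t :: "nat \<Rightarrow> int" where
  "t n = (\<Sum>k\<le>n. (-1) ^ k * int (s n k))"

definition T :: "real fps" where
  "T = Abs_fps (\<lambda>n. if n = 0 then 1 else of_int (t n))"

end

(*
  In a cluster of 15243 two successive marked occurrences are 2 or 4 positions apart, since
  occurrences at distance 1 or 3 contradict each other.  So a cluster starts with a run of
  a >= 1 marks at 0, 2, ..., 2a - 2, followed by a gap of 4 or by the end.  This forces its
  first 2a + 2 entries to be 1, u_0, 2, u_1, ..., a + 1, u_a with u_0 > ... > u_a > a + 2,
  while the rest, whose first entry is a + 2, is a cluster (or a single entry) on the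
  remaining values.  Counting with signs gives, for n >= 5,
    t_n = sum over a >= 1 of (-1)^a * C(n - a - 2, a + 1) * t_(n - 2a - 2).
  As the coefficient of x^n in (x / (1 + x^2))^(n - 2b) is (-1)^b * C(n - b - 1, b), this
  recurrence is the functional equation read off coefficientwise.
*)

theory Submission
  imports Defs
begin

section \<open>Occurrences of the pattern and cluster markings\<close>

lemma length_sigma [simp]: "length sigma = 5"
  by (simp add: sigma_def)

lemma occ_iff:
  "occ p i \<longleftrightarrow> i + 5 \<le> length p \<and>
     p!i < p!(i+2) \<and> p!(i+2) < p!(i+4) \<and> p!(i+4) < p!(i+3) \<and> p!(i+3) < p!(i+1)"
  unfolding occ_def sigma_def
  by (simp add: eval_nat_numeral less_Suc_eq all_conj_distrib) (safe; simp)

lemma occ_length: "occ p i \<Longrightarrow> i + 5 \<le> length p"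
  by (simp add: occ_iff)

lemma occ_not_Suc: "occ p i \<Longrightarrow> \<not> occ p (i + 1)"
  unfolding occ_iff by (simp add: numeral_eq_Suc)

lemma occ_not_add_3: "occ p i \<Longrightarrow> \<not> occ p (i + 3)"
  unfolding occ_iff by (simp add: numeral_eq_Suc)

lemma occ_first_le: "occ p i \<Longrightarrow> d < 5 \<Longrightarrow> p!i \<le> p!(i + d)"
  by (auto simp: occ_iff less_Suc_eq eval_nat_numeral)

lemma occ_append: "occ (xs @ ys) (length xs + i) \<longleftrightarrow> occ ys i"
  unfolding occ_def by (simp add: nth_append add.assoc)

lemma occ_map_strict_mono:
  assumes "strict_mono_on (set p) f"
  shows "occ (map f p) i \<longleftrightarrow> occ p i"
proof (cases "i + 5 \<le> length p")
  case True
  then have "map f p ! (i+a) < map f p ! (i+b) \<longleftrightarrow> p!(i+a) < p!(i+b)" if "a < 5" "b < 5" for a b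
    using that
    using strict_mono_on_less[OF assms] by (simp add: nth_mem)
  with True show ?thesis
    unfolding occ_def by simp
qed (simp add: occ_def)

definition cluster_marking :: "nat list \<Rightarrow> nat set \<Rightarrow> bool" where
  "cluster_marking p S \<longleftrightarrow>
     (\<forall>i\<in>S. occ p i) \<and> (\<forall>j<length p. \<exists>i\<in>S. i \<le> j \<and> j < i + 5) \<and>
     (\<forall>i\<in>S. \<forall>i'\<in>S. i < i' \<and> (\<forall>l\<in>S. \<not> (i < l \<and> l < i')) \<longrightarrow> i' < i + 5)"

lemma length_eq_if_set_atLeastAtMost:
  "distinct p \<Longrightarrow> set p = {1..n} \<Longrightarrow> length p = n"
  by (metis card_atLeastAtMost diff_Suc_1 distinct_card)

lemma is_cluster_iff: "is_cluster n p S \<longleftrightarrow> distinct p \<and> set p = {1..n} \<and> cluster_marking p S"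
  using length_eq_if_set_atLeastAtMost[of p n]
  unfolding is_cluster_def cluster_marking_def by auto

lemma cluster_marking_subset: "cluster_marking p S \<Longrightarrow> S \<subseteq> {..<length p}"
  unfolding cluster_marking_def using occ_length by fastforce

lemma cluster_marking_length: "cluster_marking p S \<Longrightarrow> p \<noteq> [] \<Longrightarrow> 5 \<le> length p"
  unfolding cluster_marking_def using occ_length by fastforce

lemma cluster_marking_zero: "cluster_marking p S \<Longrightarrow> p \<noteq> [] \<Longrightarrow> 0 \<in> S"
  unfolding cluster_marking_def by fastforce

lemma cluster_marking_pred:
  assumes "cluster_marking p S" "0 \<in> S" "i' \<in> S" "0 < i'"
  obtains i where "i \<in> S" "i < i'" "i' < i + 5" "\<forall>l\<in>S. \<not> (i < l \<and> l < i')"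
proof -
  let ?L = "{l\<in>S. l < i'}"
  have "finite ?L" "?L \<noteq> {}"
    using assms by auto
  then have max: "Max ?L \<in> ?L"
    by (rule Max_in)
  have between: "\<forall>l\<in>S. \<not> (Max ?L < l \<and> l < i')"
    using Max_ge[OF \<open>finite ?L\<close>] by fastforce
  with max assms(1,3) have "i' < Max ?L + 5"
    unfolding cluster_marking_def by blast
  with max between show thesis
    using that by blast
qed

lemma cluster_marking_head_le_mark:
  assumes "cluster_marking p S" "p \<noteq> []" "i \<in> S"
  shows "p!0 \<le> p!i"
  using assms(3)
proof (induction i rule: less_induct)
  case (less i')
  show ?case
  proof (cases "i' = 0")
    case False
    obtain i where "i \<in> S" "i < i'" "i' < i + 5"
      using cluster_marking_pred[OF assms(1) cluster_marking_zero[OF assms(1,2)] less.prems] False by blast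
    moreover have "occ p i"
      using assms(1) \<open>i \<in> S\<close> unfolding cluster_marking_def by blast
    ultimately have "p!i \<le> p!i'"
      using occ_first_le[of p i "i' - i"] by simp
    with less.IH \<open>i \<in> S\<close> \<open>i < i'\<close> show ?thesis
      by fastforce
  qed simp
qed

lemma cluster_marking_head_le:
  assumes "cluster_marking p S" "j < length p"
  shows "p!0 \<le> p!j"
proof -
  obtain i where i: "i \<in> S" "i \<le> j" "j < i + 5"
    using assms unfolding cluster_marking_def by blast
  moreover have "occ p i"
    using assms(1) i unfolding cluster_marking_def by blast
  ultimately have "p!i \<le> p!j"
    using occ_first_le[of p i "j - i"] by simp
  with cluster_marking_head_le_mark[OF assms(1) _ i(1)] assms(2) show ?thesis
    by fastforce
qed

lemma cluster_marking_map_strict_mono: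
  "strict_mono_on (set p) f \<Longrightarrow> cluster_marking (map f p) S \<longleftrightarrow> cluster_marking p S"
  unfolding cluster_marking_def using occ_map_strict_mono by simp

lemma cluster_marking_drop:
  assumes marking: "cluster_marking p S" and "q \<in> S"
    and ends_before: "\<forall>i\<in>S. i < q \<longrightarrow> i + 4 \<le> q"
  shows "cluster_marking (drop q p) {k. k + q \<in> S}"
  unfolding cluster_marking_def
proof (intro conjI ballI allI impI)
  fix k assume "k \<in> {k. k + q \<in> S}"
  then have "occ (take q p @ drop q p) (length (take q p) + k)"
    using marking occ_length[of p "k + q"] unfolding cluster_marking_def by (auto simp: add.commute)
  then show "occ (drop q p) k"
    by (simp only: occ_append)
next
  fix j assume "j < length (drop q p)"
  then obtain i where i: "i \<in> S" "i \<le> q + j" "q + j < i + 5"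
    using marking unfolding cluster_marking_def by (metis add.commute length_drop less_diff_conv)
  show "\<exists>i\<in>{k. k + q \<in> S}. i \<le> j \<and> j < i + 5"
  proof (cases "i < q")
    case True
    with i ends_before \<open>q \<in> S\<close> show ?thesis
      by (intro bexI[of _ 0]) auto
  next
    case False
    with i show ?thesis
      by (intro bexI[of _ "i - q"]) auto
  qed
next
  fix k k' assume kk: "k \<in> {k. k + q \<in> S}" "k' \<in> {k. k + q \<in> S}"
    and consecutive: "k < k' \<and> (\<forall>l\<in>{k. k + q \<in> S}. \<not> (k < l \<and> l < k'))"
  have "\<forall>l\<in>S. \<not> (k + q < l \<and> l < k' + q)"
  proof (intro ballI notI)
    fix l assume "l \<in> S" "k + q < l \<and> l < k' + q"
    then have "l - q \<in> {k. k + q \<in> S}" "k < l - q \<and> l - q < k'"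
      by auto
    with consecutive show False
      by blast
  qed
  with kk consecutive marking have "k' + q < k + q + 5"
    unfolding cluster_marking_def by auto
  then show "k' < k + 5"
    by simp
qed

section \<open>Signed counts of clusters on arbitrary sets of values\<close>

text \<open>A one-entry list without marks is admitted as the cluster of length 1 (the convention
  \<open>s 1 0 = 1\<close>), so that the signed count of \<open>clusters_on W\<close> is \<open>t (card W)\<close>.\<close>

definition clusters_on :: "nat set \<Rightarrow> (nat list \<times> nat set) set" where
  "clusters_on W =
     {(r, S). distinct r \<and> set r = W \<and> ((length r = 1 \<and> S = {}) \<or> cluster_marking r S)}"

definition signed_count :: "(nat list \<times> nat set) set \<Rightarrow> int" where
  "signed_count A = (\<Sum>x\<in>A. (-1) ^ card (snd x))"

lemma finite_clusters_on:
  assumes "finite W"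
  shows "finite (clusters_on W)"
proof -
  have "clusters_on W \<subseteq> {r. set r \<subseteq> W \<and> length r = card W} \<times> Pow {..<card W}"
    unfolding clusters_on_def using cluster_marking_subset distinct_card by fastforce
  moreover have "finite ({r. set r \<subseteq> W \<and> length r = card W} \<times> Pow {..<card W})"
    using assms finite_lists_length_eq by blast
  ultimately show ?thesis
    using finite_subset by blast
qed

lemma strict_mono_on_the_inv_into:
  fixes f :: "'a::linorder \<Rightarrow> 'b::linorder"
  assumes bij: "bij_betw f A B" and mono: "strict_mono_on A f"
  shows "strict_mono_on B (the_inv_into A f)"
proof (rule strict_mono_onI)
  fix x y assume xy: "x \<in> B" "y \<in> B" "x < y"
  let ?g = "the_inv_into A f"
  have "?g x \<in> A" "?g y \<in> A" "f (?g x) = x" "f (?g y) = y"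
    using bij xy bij_betwE[OF bij_betw_the_inv_into[OF bij]] f_the_inv_into_f_bij_betw[OF bij]
    by auto
  with xy(3) show "?g x < ?g y"
    using strict_mono_on_leD[OF mono] by (metis not_less)
qed

lemma map_mem_clusters_on:
  assumes bij: "bij_betw f A B" and mono: "strict_mono_on A f" and r: "(r, S) \<in> clusters_on A"
  shows "(map f r, S) \<in> clusters_on B"
proof -
  have "set r = A" "distinct r"
    using r unfolding clusters_on_def by auto
  with bij mono r show ?thesis
    unfolding clusters_on_def bij_betw_def
    by (auto simp: distinct_map cluster_marking_map_strict_mono)
qed

lemma clusters_on_map_image:
  assumes bij: "bij_betw f A B" and mono: "strict_mono_on A f"
  shows "(\<lambda>(r, S). (map f r, S)) ` clusters_on A = clusters_on B"
proof (intro equalityI subsetI)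
  fix y assume "y \<in> (\<lambda>(r, S). (map f r, S)) ` clusters_on A"
  then show "y \<in> clusters_on B"
    using map_mem_clusters_on[OF bij mono] by auto
next
  fix y assume y: "y \<in> clusters_on B"
  then obtain r S where rS: "y = (r, S)" "set r = B"
    unfolding clusters_on_def by auto
  let ?g = "the_inv_into A f"
  have "(map ?g r, S) \<in> clusters_on A"
    using map_mem_clusters_on[OF bij_betw_the_inv_into[OF bij] strict_mono_on_the_inv_into[OF bij mono]]
      y rS(1) by simp
  moreover have "map f (map ?g r) = r"
    unfolding map_map using f_the_inv_into_f_bij_betw[OF bij] rS(2) by (intro map_idI) auto
  ultimately show "y \<in> (\<lambda>(r, S). (map f r, S)) ` clusters_on A"
    using rS(1) by (auto intro: image_eqI[of _ _ "(map ?g r, S)"])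
qed

lemma signed_count_clusters_on_relabel:
  assumes bij: "bij_betw f A B" and mono: "strict_mono_on A f"
  shows "signed_count (clusters_on A) = signed_count (clusters_on B)"
proof -
  let ?h = "\<lambda>(r::nat list, S::nat set). (map f r, S)"
  have "inj_on ?h (clusters_on A)"
  proof (rule inj_onI, clarsimp)
    fix r1 r2 S assume "(r1, S) \<in> clusters_on A" "(r2, S) \<in> clusters_on A" "map f r1 = map f r2"
    moreover have "inj_on f A"
      using bij by (simp add: bij_betw_def)
    ultimately show "r1 = r2"
      unfolding clusters_on_def by (auto intro: inj_on_map_eq_map[THEN iffD1])
  qed
  then have "bij_betw ?h (clusters_on A) (clusters_on B)"
    using clusters_on_map_image[OF bij mono] by (simp add: bij_betw_def)
  then have "(\<Sum>x\<in>clusters_on A. (-1::int) ^ card (snd (?h x))) = signed_count (clusters_on B)"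
    unfolding signed_count_def by (rule sum.reindex_bij_betw)
  then show ?thesis
    by (simp add: signed_count_def split_beta)
qed

lemma sorted_nth_bij_strict_mono:
  assumes "finite W" "card W = m"
  shows "bij_betw (\<lambda>i. sorted_list_of_set W ! (i - 1)) {1..m} W"
    and "strict_mono_on {1..m} (\<lambda>i. sorted_list_of_set W ! (i - 1))"
proof -
  let ?L = "sorted_list_of_set W"
  have len: "length ?L = m"
    using assms by simp
  have "bij_betw (\<lambda>i. i - 1) {1..m} {..<m}"
    by (rule bij_betw_byWitness[where f' = "\<lambda>i. i + 1"]) auto
  moreover have "bij_betw ((!) ?L) {..<m} W"
    by (rule bij_betw_nth) (use assms len in auto)
  ultimately show "bij_betw (\<lambda>i. ?L ! (i - 1)) {1..m} W"
    using bij_betw_trans by (auto simp: comp_def)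
  have sorted: "sorted_wrt (<) ?L"
    by simp
  show "strict_mono_on {1..m} (\<lambda>i. ?L ! (i - 1))"
  proof (rule strict_mono_onI)
    fix i j assume "i \<in> {1..m}" "j \<in> {1..m}" "i < j"
    then show "?L ! (i - 1) < ?L ! (j - 1)"
      using sorted_wrt_nth_less[OF sorted, of "i - 1" "j - 1"] len by auto
  qed
qed

lemma t_small: "n < 5 \<Longrightarrow> t n = (if n = 1 then 1 else 0)"
  by (auto simp: t_def s_def atMost_Suc)

lemma finite_clusters: "finite {(p, S). is_cluster n p S}"
proof (rule finite_subset)
  show "{(p, S). is_cluster n p S} \<subseteq> clusters_on {1..n}"
    unfolding clusters_on_def is_cluster_iff by auto
qed (rule finite_clusters_on, simp)

lemma t_eq_signed_count:
  assumes "5 \<le> n"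
  shows "t n = signed_count {(p, S). is_cluster n p S}"
proof -
  let ?C = "{(p, S). is_cluster n p S}"
  have "card (snd x) \<le> n" if C_mem: "x \<in> ?C" for x
  proof -
    obtain p S where x: "x = (p, S)" "distinct p" "set p = {1..n}" "cluster_marking p S"
      using C_mem unfolding is_cluster_iff by auto
    then have "S \<subseteq> {..<n}"
      using cluster_marking_subset length_eq_if_set_atLeastAtMost by metis
    then show ?thesis
      using card_mono[of "{..<n}" S] x(1) by simp
  qed
  then have "signed_count ?C =
      (\<Sum>k\<le>n. \<Sum>x\<in>{x \<in> ?C. card (snd x) = k}. (-1::int) ^ card (snd x))"
    unfolding signed_count_def using finite_clusters[of n]
    by (intro sum.group[symmetric]) auto
  also have "\<dots> = t n"
    unfolding t_def s_def using assms
    by (intro sum.cong) (auto simp: case_prod_beta intro!: arg_cong[where f = card])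
  finally show ?thesis
    by simp
qed

lemma clusters_on_atLeastAtMost_small:
  assumes "1 \<le> m" "m < 5"
  shows "clusters_on {1..m} = (if m = 1 then {([1], {})} else {})"
proof -
  have "(r, S) \<in> clusters_on {1..m} \<longleftrightarrow> m = 1 \<and> r = [1] \<and> S = {}" for r S
  proof
    assume r: "(r, S) \<in> clusters_on {1..m}"
    then have "length r = m" "set r = {1..m}"
      using length_eq_if_set_atLeastAtMost unfolding clusters_on_def by auto
    moreover have "\<not> cluster_marking r S"
      using cluster_marking_length[of r S] assms \<open>length r = m\<close> by fastforce
    ultimately show "m = 1 \<and> r = [1] \<and> S = {}"
      using r unfolding clusters_on_def by (auto simp: length_Suc_conv)
  qed (auto simp: clusters_on_def)
  then show ?thesis
    by auto
qed

lemma signed_count_clusters_on: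
  assumes "finite W" "card W = m" "1 \<le> m"
  shows "signed_count (clusters_on W) = t m"
proof -
  have "signed_count (clusters_on W) = signed_count (clusters_on {1..m})"
    using signed_count_clusters_on_relabel[OF sorted_nth_bij_strict_mono[OF assms(1,2)]] by simp
  also have "\<dots> = t m"
  proof (cases "m < 5")
    case True
    with assms(3) show ?thesis
      using clusters_on_atLeastAtMost_small t_small by (simp add: signed_count_def)
  next
    case False
    then have "clusters_on {1..m} = {(p, S). is_cluster m p S}"
      using length_eq_if_set_atLeastAtMost[of _ m]
      unfolding clusters_on_def is_cluster_iff by auto
    with False show ?thesis
      using t_eq_signed_count by simp
  qed
  finally show ?thesis .
qed

section \<open>Gluing a zigzag prefix to a cluster\<close>

definition desc_list :: "nat set \<Rightarrow> nat list" where
  "desc_list U = rev (sorted_list_of_set U)"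

lemma length_desc_list: "finite U \<Longrightarrow> length (desc_list U) = card U"
  by (simp add: desc_list_def)

lemma set_desc_list: "finite U \<Longrightarrow> set (desc_list U) = U"
  by (simp add: desc_list_def)

lemma distinct_desc_list: "distinct (desc_list U)"
  by (simp add: desc_list_def)

lemma desc_list_nth_less:
  assumes "finite U" "j < k" "k < card U"
  shows "desc_list U ! k < desc_list U ! j"
proof -
  let ?L = "sorted_list_of_set U"
  have "sorted_wrt (<) ?L" "length ?L = card U"
    using assms(1) by simp_all
  with assms show ?thesis
    unfolding desc_list_def by (simp add: rev_nth sorted_wrt_nth_less)
qed

lemma desc_list_unique:
  assumes "sorted_wrt (>) xs"
  shows "desc_list (set xs) = xs"
proof -
  have "sorted_wrt (<) (rev xs)"
    using assms by (simp add: sorted_wrt_rev)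
  then have "sorted (rev xs)" "distinct (rev xs)"
    by (simp_all add: strict_sorted_iff)
  then have "sorted_list_of_set (set (rev xs)) = rev xs"
    by (rule sorted_list_of_set.idem_if_sorted_distinct)
  then show ?thesis
    by (simp add: desc_list_def)
qed

text \<open>The list \<open>1, u\<^sub>0, 2, u\<^sub>1, \<dots>, a + 1, u\<^sub>a\<close> with \<open>u\<^sub>0 > \<dots> > u\<^sub>a\<close>
  the elements of \<open>U\<close>: the forced beginning of a cluster whose first marks are \<open>0, 2, \<dots>, 2a - 2\<close>.\<close>

definition zigzag :: "nat \<Rightarrow> nat set \<Rightarrow> nat list" where
  "zigzag a U = map (\<lambda>i. if even i then i div 2 + 1 else desc_list U ! (i div 2)) [0..<2*a+2]"

lemma length_zigzag [simp]: "length (zigzag a U) = 2*a + 2"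
  by (simp add: zigzag_def)

lemma zigzag_nth:
  "i < 2*a + 2 \<Longrightarrow> zigzag a U ! i = (if even i then i div 2 + 1 else desc_list U ! (i div 2))"
  unfolding zigzag_def by (simp del: upt_Suc)

lemma zigzag_nth_even: "j \<le> a \<Longrightarrow> zigzag a U ! (2*j) = j + 1"
  by (simp add: zigzag_nth)

lemma zigzag_nth_odd: "j \<le> a \<Longrightarrow> zigzag a U ! (2*j + 1) = desc_list U ! j"
  by (simp add: zigzag_nth)

lemma set_zigzag:
  assumes "finite U" "card U = a + 1"
  shows "set (zigzag a U) = {1..a+1} \<union> U"
proof -
  have "{..<2*a+2} = (\<lambda>j. 2*j) ` {..a} \<union> (\<lambda>j. 2*j+1) ` {..a}"
  proof (intro equalityI subsetI)
    fix x assume "x \<in> {..<2*a+2}"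
    then show "x \<in> (\<lambda>j. 2*j) ` {..a} \<union> (\<lambda>j. 2*j+1) ` {..a}"
      by (cases "even x") (auto elim!: evenE oddE)
  qed auto
  moreover have "set (zigzag a U) = (\<lambda>i. zigzag a U ! i) ` {..<2*a+2}"
    by (auto simp: set_conv_nth)
  ultimately have "set (zigzag a U) =
      (\<lambda>j. zigzag a U ! (2*j)) ` {..a} \<union> (\<lambda>j. zigzag a U ! (2*j+1)) ` {..a}"
    by (simp add: image_Un image_image)
  also have "(\<lambda>j. zigzag a U ! (2*j)) ` {..a} = Suc ` {0..a}"
    by (simp add: zigzag_nth_even atMost_atLeast0)
  also have "Suc ` {0..a} = {1..a+1}"
    by simp
  also have "(\<lambda>j. zigzag a U ! (2*j+1)) ` {..a} = nth (desc_list U) ` {0..<a+1}"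
    by (simp add: atLeastLessThanSuc_atLeastAtMost atMost_atLeast0 zigzag_nth_odd[simplified])
  also have "\<dots> = set (desc_list U)"
    using length_desc_list[OF assms(1)] assms(2) by (simp add: nth_image)
  finally show ?thesis
    by (simp only: set_desc_list[OF assms(1)])
qed

lemma distinct_zigzag:
  assumes "finite U" "card U = a + 1" "U \<inter> {1..a+1} = {}"
  shows "distinct (zigzag a U)"
proof (rule card_distinct)
  have "{1..a+1} \<inter> U = {}"
    using assms(3) by blast
  with assms(1) have "card ({1..a+1} \<union> U) = card {1..a+1} + card U"
    by (intro card_Un_disjoint) simp_all
  then show "card (set (zigzag a U)) = length (zigzag a U)"
    by (simp only: set_zigzag[OF assms(1,2)] assms(2) length_zigzag card_atLeastAtMost)
qed

text \<open>The marks of a cluster split into an initial run \<open>0, 2, \<dots>, 2a - 2\<close> of length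
  \<open>a = chain_length S\<close> and the marks of the remaining cluster, shifted past the prefix of
  length \<open>2a + 2\<close>.\<close>

definition chain_marks :: "nat \<Rightarrow> nat set" where
  "chain_marks a = (\<lambda>j. 2*j) ` {..<a}"

definition shift_marks :: "nat \<Rightarrow> nat set \<Rightarrow> nat set" where
  "shift_marks a S = (\<lambda>i. i + (2*a + 2)) ` S"

definition chain_length :: "nat set \<Rightarrow> nat" where
  "chain_length S = (LEAST a. 2*a \<notin> S)"

lemma mem_chain_marks: "i \<in> chain_marks a \<longleftrightarrow> even i \<and> i < 2*a"
  unfolding chain_marks_def by (auto elim!: evenE)

lemma mem_shift_marks: "i \<in> shift_marks a S \<longleftrightarrow> 2*a + 2 \<le> i \<and> i - (2*a + 2) \<in> S"
  unfolding shift_marks_def by (auto simp: image_iff intro: bexI[where x = "i - (2*a + 2)"])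

lemma add_mem_shift_marks [simp]: "k + (2*a + 2) \<in> shift_marks a S \<longleftrightarrow> k \<in> S"
  by (simp add: mem_shift_marks)

lemma mem_marks_shift: "k + (2*a + 2) \<in> chain_marks a \<union> shift_marks a S \<longleftrightarrow> k \<in> S"
  by (simp add: mem_chain_marks mem_shift_marks)

lemma chain_length_marks: "chain_length (chain_marks a \<union> shift_marks a S) = a"
  unfolding chain_length_def
  by (rule Least_equality) (auto simp: mem_chain_marks mem_shift_marks)

lemma card_marks:
  assumes "finite S"
  shows "card (chain_marks a \<union> shift_marks a S) = a + card S"
proof -
  have "chain_marks a \<inter> shift_marks a S = {}"
    by (auto simp: mem_chain_marks mem_shift_marks)
  moreover have "card (chain_marks a) = a"
    unfolding chain_marks_def by (subst card_image) (auto simp: inj_on_def)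
  moreover have "card (shift_marks a S) = card S"
    unfolding shift_marks_def by (subst card_image) (auto simp: inj_on_def)
  ultimately show ?thesis
    using assms by (simp add: card_Un_disjoint chain_marks_def shift_marks_def)
qed

lemma mem_shift_marks_tail:
  "x \<in> shift_marks a {k. k + (2*a + 2) \<in> S} \<longleftrightarrow> 2*a + 2 \<le> x \<and> x \<in> S"
proof
  assume x: "2*a + 2 \<le> x \<and> x \<in> S"
  then have x_eq: "x - (2*a + 2) + (2*a + 2) = x"
    by linarith
  show "x \<in> shift_marks a {k. k + (2*a + 2) \<in> S}"
    unfolding shift_marks_def
  proof (rule image_eqI)
    show "x = x - (2*a + 2) + (2*a + 2)"
      using x_eq by simp
    show "x - (2*a + 2) \<in> {k. k + (2*a + 2) \<in> S}"
      using x by (simp only: mem_Collect_eq x_eq)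
  qed
qed (auto simp: shift_marks_def)

lemma diff_mem_tail_marks: "(q::nat) \<le> i \<Longrightarrow> i - q \<in> {k. k + q \<in> S} \<longleftrightarrow> i \<in> S"
  by simp

locale glued_cluster =
  fixes a n :: nat and U :: "nat set" and r :: "nat list" and S :: "nat set"
  assumes a_pos: "1 \<le> a" and n_bound: "2*a + 3 \<le> n"
    and U_sub: "U \<subseteq> {a+3..n}" and card_U: "card U = a + 1"
    and tail: "(r, S) \<in> clusters_on ({a+2..n} - U)"
begin

lemma finite_U: "finite U"
  using U_sub finite_subset by blast

lemma tail_set: "set r = {a+2..n} - U" and tail_distinct: "distinct r"
  using tail unfolding clusters_on_def by auto

lemma tail_length: "length r = n - (2*a + 2)"
proof -
  have "U \<subseteq> {a+2..n}"
    using U_sub by auto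
  then have "card ({a+2..n} - U) = n - (2*a + 2)"
    using card_Diff_subset[OF finite_U] card_U n_bound by simp
  then show ?thesis
    using distinct_card[OF tail_distinct] tail_set by simp
qed

lemma tail_marking: "S \<noteq> {} \<Longrightarrow> cluster_marking r S"
  using tail unfolding clusters_on_def by auto

lemma tail_marks_empty_iff: "S = {} \<longleftrightarrow> length r = 1"
proof
  assume "length r = 1"
  then show "S = {}"
    using tail_marking cluster_marking_length by fastforce
next
  assume "S = {}"
  have "r \<noteq> []"
    using tail_length n_bound by auto
  then have "\<not> cluster_marking r {}"
    using cluster_marking_zero by blast
  with tail \<open>S = {}\<close> show "length r = 1"
    unfolding clusters_on_def by auto
qed

lemma zero_mem_tail_marks: "S \<noteq> {} \<Longrightarrow> 0 \<in> S"
  using tail_marking cluster_marking_zero tail_length n_bound by fastforce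

lemma tail_head: "r ! 0 = a + 2"
proof -
  have "a + 2 \<in> set r"
    using tail_set U_sub n_bound by auto
  then obtain j where j: "j < length r" "r ! j = a + 2"
    by (metis in_set_conv_nth)
  have "r ! 0 \<le> r ! j"
  proof (cases "S = {}")
    case True
    then show ?thesis
      using j tail_marks_empty_iff by simp
  next
    case False
    then show ?thesis
      using cluster_marking_head_le[OF tail_marking] j by blast
  qed
  moreover have "r ! 0 \<in> set r"
    using j(1) by (intro nth_mem) auto
  ultimately show ?thesis
    using j tail_set by auto
qed

lemma glue_nth_even: "even i \<Longrightarrow> i \<le> 2*a + 2 \<Longrightarrow> (zigzag a U @ r) ! i = i div 2 + 1"
  using tail_head by (cases "i < 2*a + 2") (auto simp: nth_append zigzag_nth)

lemma glue_nth_odd: "odd i \<Longrightarrow> i < 2*a + 2 \<Longrightarrow> (zigzag a U @ r) ! i = desc_list U ! (i div 2)"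
  by (simp add: nth_append zigzag_nth)

lemma occ_glue_chain:
  assumes "j < a"
  shows "occ (zigzag a U @ r) (2*j)"
proof -
  let ?p = "zigzag a U @ r"
  have "?p ! (2*j) = j + 1" "?p ! (2*j + 2) = j + 2" "?p ! (2*j + 4) = j + 3"
    using assms by (simp_all add: glue_nth_even)
  moreover have "?p ! (2*j + 1) = desc_list U ! j" "?p ! (2*j + 3) = desc_list U ! (j + 1)"
    using assms by (simp_all add: glue_nth_odd)
  moreover have "desc_list U ! (j + 1) < desc_list U ! j"
    using desc_list_nth_less[OF finite_U] card_U assms by simp
  moreover have "a + 3 \<le> desc_list U ! (j + 1)"
    using nth_mem[of "j + 1" "desc_list U"] set_desc_list[OF finite_U] U_sub
      length_desc_list[OF finite_U] card_U assms by auto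
  ultimately show ?thesis
    unfolding occ_iff using tail_length n_bound assms by simp
qed

lemma occ_glue_shift: "k \<in> S \<Longrightarrow> occ (zigzag a U @ r) (k + (2*a + 2))"
  using tail_marking occ_append[of "zigzag a U" r k]
  unfolding cluster_marking_def by (auto simp: add.commute)

lemma occ_glue:
  assumes "i \<in> chain_marks a \<union> shift_marks a S"
  shows "occ (zigzag a U @ r) i"
proof -
  consider "even i" "i < 2*a" | "2*a + 2 \<le> i" "i - (2*a + 2) \<in> S"
    using assms by (auto simp: mem_chain_marks mem_shift_marks)
  then show ?thesis
  proof cases
    case 1
    then show ?thesis
      using occ_glue_chain[of "i div 2"] by auto
  next
    case 2
    then show ?thesis
      using occ_glue_shift[OF 2(2)] by (simp only: le_add_diff_inverse2[OF 2(1)])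
  qed
qed

lemma glue_cover:
  assumes "j < n"
  shows "\<exists>i\<in>chain_marks a \<union> shift_marks a S. i \<le> j \<and> j < i + 5"
proof -
  consider "j < 2*a" | "2*a \<le> j" "j < 2*a + 3" | "2*a + 3 \<le> j"
    by linarith
  then show ?thesis
  proof cases
    case 1
    then show ?thesis
      by (intro bexI[of _ "2 * (j div 2)"]) (auto simp: mem_chain_marks)
  next
    case 2
    then show ?thesis
      using a_pos by (intro bexI[of _ "2*a - 2"]) (auto simp: mem_chain_marks)
  next
    case 3
    then have "j - (2*a + 2) < length r" "length r \<noteq> 1"
      using assms tail_length by auto
    then obtain k where "k \<in> S" "k \<le> j - (2*a + 2)" "j - (2*a + 2) < k + 5"
      using tail_marking tail_marks_empty_iff unfolding cluster_marking_def by blast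
    with 3 show ?thesis
      by (intro bexI[of _ "k + (2*a + 2)"]) (auto simp: mem_shift_marks)
  qed
qed

lemma glue_overlap_tail:
  assumes "2*a + 2 \<le> i" "i < i'" "i - (2*a + 2) \<in> S" "i' - (2*a + 2) \<in> S"
    and consecutive: "\<forall>l\<in>chain_marks a \<union> shift_marks a S. \<not> (i < l \<and> l < i')"
  shows "i' < i + 5"
proof -
  let ?q = "2*a + 2"
  have "\<forall>l\<in>S. \<not> (i - ?q < l \<and> l < i' - ?q)"
  proof (intro ballI notI)
    fix l assume "l \<in> S" "i - ?q < l \<and> l < i' - ?q"
    then have "l + ?q \<in> chain_marks a \<union> shift_marks a S" "i < l + ?q \<and> l + ?q < i'"
      using assms(1) by (auto simp: mem_shift_marks)
    with consecutive show False
      by blast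
  qed
  moreover have "i - ?q < i' - ?q" "S \<noteq> {}"
    using assms(1-3) by auto
  ultimately have "i' - ?q < i - ?q + 5"
    using assms(3,4) tail_marking unfolding cluster_marking_def by blast
  with assms(1) show ?thesis
    by simp
qed

lemma glue_overlap:
  fixes M
  defines "M \<equiv> chain_marks a \<union> shift_marks a S"
  assumes "i \<in> M" "i' \<in> M" "i < i'" and consecutive: "\<forall>l\<in>M. \<not> (i < l \<and> l < i')"
  shows "i' < i + 5"
proof (cases "i' < 2*a + 2")
  case True
  then have "i' < 2*a" "even i"
    using assms by (auto simp: M_def mem_chain_marks mem_shift_marks)
  have "\<not> i + 2 < i'"
  proof
    assume "i + 2 < i'"
    with \<open>i' < 2*a\<close> \<open>even i\<close> have "i + 2 \<in> M"
      by (simp add: M_def mem_chain_marks)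
    with consecutive \<open>i + 2 < i'\<close> show False
      by auto
  qed
  then show ?thesis
    by simp
next
  case i'_high: False
  then have "S \<noteq> {}"
    using assms(3) by (auto simp: M_def mem_chain_marks mem_shift_marks)
  show ?thesis
  proof (cases "i < 2*a + 2")
    case True
    have "2*a - 2 \<in> M" "2*a + 2 \<in> M"
      using a_pos zero_mem_tail_marks[OF \<open>S \<noteq> {}\<close>] add_mem_shift_marks[of 0 a S]
      by (auto simp: M_def mem_chain_marks)
    with consecutive have "\<not> (i < 2*a - 2 \<and> 2*a - 2 < i')" "\<not> (i < 2*a + 2 \<and> 2*a + 2 < i')"
      by blast+
    moreover have "even i" "i < 2*a"
      using True assms(2) by (auto simp: M_def mem_chain_marks mem_shift_marks)
    then have "i \<le> 2*a - 2"
      by (auto elim!: evenE)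
    ultimately show ?thesis
      using i'_high a_pos by linarith
  next
    case False
    with assms(2,3) i'_high have "i - (2*a + 2) \<in> S" "i' - (2*a + 2) \<in> S"
      by (auto simp: M_def mem_chain_marks mem_shift_marks)
    with False \<open>i < i'\<close> consecutive show ?thesis
      unfolding M_def by (intro glue_overlap_tail) simp_all
  qed
qed

lemma glue_is_cluster: "is_cluster n (zigzag a U @ r) (chain_marks a \<union> shift_marks a S)"
proof -
  have "U \<inter> {1..a+1} = {}"
    using U_sub by auto
  then have "distinct (zigzag a U @ r)"
    using distinct_zigzag[OF finite_U card_U] set_zigzag[OF finite_U card_U] tail_distinct tail_set
    by auto
  moreover have "set (zigzag a U @ r) = {1..n}"
    using set_zigzag[OF finite_U card_U] tail_set U_sub n_bound by auto
  moreover have "occ (zigzag a U @ r) i" if "i \<in> chain_marks a \<union> shift_marks a S" for i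
    using that by (rule occ_glue)
  ultimately show ?thesis
    unfolding is_cluster_iff cluster_marking_def
    using glue_cover glue_overlap tail_length n_bound by auto
qed

end

section \<open>Decomposing a cluster\<close>

lemma increasing_add_diff_le:
  fixes e :: "nat \<Rightarrow> nat"
  assumes step: "\<And>j. j < m \<Longrightarrow> e j < e (Suc j)" and "j \<le> k" "k \<le> m"
  shows "e j + (k - j) \<le> e k"
  using assms(2,3)
proof (induction k)
  case (Suc k)
  show ?case
  proof (cases "j = Suc k")
    case False
    with Suc step[of k] show ?thesis
      by (simp add: Suc_diff_le)
  qed simp
qed simp

lemma card_nth_filter_distinct:
  assumes "distinct p"
  shows "card {x. x < length p \<and> P (p ! x)} = card {v \<in> set p. P v}"
proof -
  have "{v \<in> set p. P v} = (!) p ` {x. x < length p \<and> P (p ! x)}"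
    by (auto simp: in_set_conv_nth)
  moreover have "inj_on ((!) p) {x. x < length p \<and> P (p ! x)}"
    using assms by (auto simp: inj_on_def nth_eq_iff_index_eq)
  ultimately show ?thesis
    by (simp add: card_image)
qed

definition odd_entries :: "nat \<Rightarrow> nat list \<Rightarrow> nat list" where
  "odd_entries a p = map (\<lambda>j. p ! (2*j + 1)) [0..<a+1]"

locale cluster_split =
  fixes n :: nat and p :: "nat list" and S :: "nat set" and a :: nat
  assumes cluster: "is_cluster n p S" and n_ge: "5 \<le> n" and a_eq: "a = chain_length S"
begin

lemma p_distinct: "distinct p" and p_set: "set p = {1..n}" and p_marking: "cluster_marking p S"
  using cluster unfolding is_cluster_iff by auto

lemma p_length: "length p = n"
  using length_eq_if_set_atLeastAtMost[OF p_distinct p_set] .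

lemma occ_mark: "i \<in> S \<Longrightarrow> occ p i"
  using p_marking unfolding cluster_marking_def by blast

lemma chain_marks_subset: "chain_marks a \<subseteq> S"
  using not_less_Least[where P = "\<lambda>a. 2*a \<notin> S"]
  unfolding a_eq chain_length_def by (auto simp: chain_marks_def)

lemma chain_end_not_mark: "2*a \<notin> S"
proof -
  have "2*n \<notin> S"
    using cluster_marking_subset[OF p_marking] p_length by auto
  then show ?thesis
    unfolding a_eq chain_length_def by (rule LeastI)
qed

lemma a_pos: "1 \<le> a"
proof -
  have "p \<noteq> []"
    using p_length n_ge by auto
  then show ?thesis
    using chain_end_not_mark cluster_marking_zero[OF p_marking] by (cases a) auto
qed

lemma occ_chain: "j < a \<Longrightarrow> occ p (2*j)"
  using chain_marks_subset occ_mark mem_chain_marks[of "2*j" a] by auto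

lemma last_chain_mark: "2*a - 2 \<in> S"
  using chain_marks_subset a_pos by (auto simp: mem_chain_marks)

lemma n_bound: "2*a + 3 \<le> n"
  using occ_length[OF occ_chain[of "a - 1"]] a_pos p_length by simp

text \<open>Successive occurrences of \<open>15243\<close> are 2 or 4 apart, so the chain \<open>0, 2, \<dots>, 2a - 2\<close> is
  followed by no mark before \<open>2a + 2\<close>.\<close>

lemma marks_below: "i \<in> S \<Longrightarrow> i < 2*a + 2 \<Longrightarrow> i \<in> chain_marks a"
proof (cases "even i")
  case True
  assume i: "i \<in> S" "i < 2*a + 2"
  obtain b where b: "i = 2*b"
    using True by (rule evenE)
  with i chain_end_not_mark have "b \<le> a" "b \<noteq> a"
    by auto
  with b show ?thesis
    by (simp add: mem_chain_marks)
next
  case False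
  assume i: "i \<in> S" "i < 2*a + 2"
  with False obtain j where j: "i = 2*j + 1" "j \<le> a"
    by (auto elim!: oddE)
  show ?thesis
  proof (cases "j < a")
    case True
    with occ_not_Suc[OF occ_chain[OF True]] occ_mark[OF i(1)] j(1) show ?thesis
      by simp
  next
    case False
    with j a_pos have "i = (2*a - 2) + 3"
      by simp
    with occ_not_add_3[OF occ_mark[OF last_chain_mark]] occ_mark[OF i(1)] show ?thesis
      by simp
  qed
qed

lemma marks_below_le:
  assumes "i \<in> S" "i < 2*a + 2"
  shows "i \<le> 2*a - 2"
proof -
  have "even i" "i < 2*a"
    using marks_below[OF assms] by (simp_all add: mem_chain_marks)
  then show ?thesis
    by (auto elim!: evenE)
qed

lemma marks_split: "S = chain_marks a \<union> shift_marks a {k. k + (2*a + 2) \<in> S}"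
  unfolding set_eq_iff Un_iff mem_shift_marks_tail
  using marks_below chain_marks_subset not_le by blast

lemma mark_after_chain:
  assumes "i' \<in> S" "2*a + 2 \<le> i'"
  shows "2*a + 2 \<in> S"
proof -
  define m where "m = (LEAST m. m \<in> S \<and> 2*a + 2 \<le> m)"
  have m: "m \<in> S" "2*a + 2 \<le> m"
    unfolding m_def using LeastI[of "\<lambda>m. m \<in> S \<and> 2*a + 2 \<le> m"] assms by blast+
  have "p \<noteq> []" "0 < m"
    using p_length n_ge m(2) by auto
  then obtain i where i: "i \<in> S" "i < m" "m < i + 5"
    using cluster_marking_pred[OF p_marking cluster_marking_zero[OF p_marking] m(1)] by blast
  have "i < 2*a + 2"
    using i not_less_Least[of i "\<lambda>m. m \<in> S \<and> 2*a + 2 \<le> m"] unfolding m_def by auto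
  then have "i \<le> 2*a - 2"
    using marks_below_le i(1) by blast
  with i m a_pos have "m = 2*a + 2"
    by linarith
  with m show ?thesis
    by simp
qed

lemma tail_marking:
  assumes "{k. k + (2*a + 2) \<in> S} \<noteq> {}"
  shows "cluster_marking (drop (2*a + 2) p) {k. k + (2*a + 2) \<in> S}"
proof (rule cluster_marking_drop[OF p_marking])
  show "2*a + 2 \<in> S"
    using assms mark_after_chain by auto
  show "\<forall>i\<in>S. i < 2*a + 2 \<longrightarrow> i + 4 \<le> 2*a + 2"
    using marks_below_le a_pos by fastforce
qed

lemma tail_singleton:
  assumes "{k. k + (2*a + 2) \<in> S} = {}"
  shows "n = 2*a + 3"
proof -
  have "n - 1 < length p"
    using p_length n_ge by simp
  then obtain i where i: "i \<in> S" "i \<le> n - 1" "n - 1 < i + 5"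
    using p_marking unfolding cluster_marking_def by blast
  have "i < 2*a + 2"
  proof (rule ccontr)
    assume "\<not> i < 2*a + 2"
    then have "2*a + 2 \<le> i"
      by simp
    then have "i - (2*a + 2) \<in> {k. k + (2*a + 2) \<in> S}"
      using i(1) diff_mem_tail_marks by blast
    with assms show False
      by blast
  qed
  then have "i \<le> 2*a - 2"
    using marks_below_le i(1) by blast
  with i n_bound a_pos show ?thesis
    by linarith
qed

lemma last_chain_occ: "p ! (2*a) < p ! (2*a + 2)" "p ! (2*a + 2) < p ! (2*a + 1)"
proof -
  obtain b where "a = Suc b"
    using a_pos by (cases a) auto
  with occ_chain[of b] show "p ! (2*a) < p ! (2*a + 2)" "p ! (2*a + 2) < p ! (2*a + 1)"
    unfolding occ_iff by (simp_all add: numeral_eq_Suc)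
qed

lemma even_step: "j \<le> a \<Longrightarrow> p ! (2*j) < p ! (2*Suc j)"
  using occ_chain[of j] last_chain_occ(1) unfolding occ_iff
  by (cases "j < a") (auto simp: numeral_eq_Suc)

lemma odd_step: "j < a \<Longrightarrow> p ! (2*Suc j + 1) < p ! (2*j + 1)"
  using occ_chain[of j] unfolding occ_iff by (simp add: numeral_eq_Suc)

lemma head_le_tail:
  assumes "2*a + 2 \<le> x" "x < n"
  shows "p ! (2*a + 2) \<le> p ! x"
proof (cases "{k. k + (2*a + 2) \<in> S} = {}")
  case True
  with assms tail_singleton have "x = 2*a + 2"
    by simp
  then show ?thesis
    by simp
next
  case False
  have "x - (2*a + 2) < length (drop (2*a + 2) p)"
    using assms p_length by simp
  then have "drop (2*a + 2) p ! 0 \<le> drop (2*a + 2) p ! (x - (2*a + 2))"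
    by (rule cluster_marking_head_le[OF tail_marking[OF False]])
  moreover have "2*a + 2 \<le> length p" "2*a + 2 + (x - (2*a + 2)) = x"
    using assms p_length by linarith+
  ultimately show ?thesis
    by (simp only: nth_drop add_0_right)
qed

lemma p_nth_le: "x < n \<Longrightarrow> p ! x \<le> n"
  using p_set p_length nth_mem[of x p] by auto

lemma odd_decreasing:
  assumes "j \<le> k" "k \<le> a"
  shows "p ! (2*k + 1) + (k - j) \<le> p ! (2*j + 1)"
proof -
  have le_n: "i \<le> a \<Longrightarrow> p ! (2*i + 1) \<le> n" for i
    using p_nth_le n_bound by simp
  have "n - p ! (2*i + 1) < n - p ! (2*Suc i + 1)" if "i < a" for i
    using odd_step[OF that] le_n[of i] that by linarith
  then have "n - p ! (2*j + 1) + (k - j) \<le> n - p ! (2*k + 1)"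
    by (rule increasing_add_diff_le) (use assms in auto)
  with le_n[of j] le_n[of k] assms show ?thesis
    by linarith
qed

lemma even_increasing:
  assumes "j \<le> k" "k \<le> a + 1"
  shows "p ! (2*j) + (k - j) \<le> p ! (2*k)"
proof -
  have "p ! (2*i) < p ! (2*Suc i)" if "i < a + 1" for i
    using that by (intro even_step) simp
  then show ?thesis
    using assms by (rule increasing_add_diff_le[where e = "\<lambda>j. p ! (2*j)"])
qed

text \<open>The entries below \<open>p ! (2a + 2)\<close> sit exactly at the \<open>a + 1\<close> even positions before it,
  which pins down the value of \<open>p ! (2a + 2)\<close>.\<close>

lemma entries_below_head: "{x. x < n \<and> p ! x < p ! (2*a + 2)} = (\<lambda>j. 2*j) ` {..a}"
proof (intro equalityI subsetI)
  fix x assume "x \<in> {x. x < n \<and> p ! x < p ! (2*a + 2)}"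
  then have x: "x < n" "p ! x < p ! (2*a + 2)"
    by simp_all
  have "x < 2*a + 2"
  proof (rule ccontr)
    assume "\<not> x < 2*a + 2"
    with head_le_tail x show False
      by (meson not_le)
  qed
  have "even x"
  proof (rule ccontr)
    assume "odd x"
    then obtain j where j: "x = 2*j + 1"
      by (rule oddE)
    with \<open>x < 2*a + 2\<close> odd_decreasing[of j a] have "p ! (2*a + 1) \<le> p ! x"
      by simp
    with last_chain_occ(2) x(2) show False
      by simp
  qed
  then obtain j where "x = 2*j"
    by (rule evenE)
  with \<open>x < 2*a + 2\<close> show "x \<in> (\<lambda>j. 2*j) ` {..a}"
    by auto
next
  fix x assume "x \<in> (\<lambda>j. 2*j) ` {..a}"
  then obtain j where "j \<le> a" "x = 2*j"
    by blast
  with even_increasing[of j "a + 1"] n_bound show "x \<in> {x. x < n \<and> p ! x < p ! (2*a + 2)}"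
    by simp
qed

lemma head_value: "p ! (2*a + 2) = a + 2"
proof -
  have "card {v \<in> set p. v < p ! (2*a + 2)} = a + 1"
    using card_nth_filter_distinct[OF p_distinct, of "\<lambda>v. v < p ! (2*a + 2)"] entries_below_head p_length
    by (simp add: card_image inj_on_def)
  moreover have "{v \<in> set p. v < p ! (2*a + 2)} = {1..<p ! (2*a + 2)}"
    using p_set p_nth_le[of "2*a + 2"] n_bound by auto
  ultimately show ?thesis
    by simp
qed

lemma even_value: "j \<le> a + 1 \<Longrightarrow> p ! (2*j) = j + 1"
proof -
  assume j: "j \<le> a + 1"
  have "1 \<le> p ! 0"
    using p_set p_length n_ge nth_mem[of 0 p] by auto
  with even_increasing[of 0 j] even_increasing[of j "a + 1"] head_value j show ?thesis
    by simp
qed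

lemma length_odd_entries: "length (odd_entries a p) = a + 1"
  by (simp add: odd_entries_def)

lemma odd_entries_nth: "j \<le> a \<Longrightarrow> odd_entries a p ! j = p ! (2*j + 1)"
  unfolding odd_entries_def by (simp del: upt_Suc)

lemma desc_list_odd_entries: "desc_list (set (odd_entries a p)) = odd_entries a p"
proof (rule desc_list_unique)
  show "sorted_wrt (>) (odd_entries a p)"
    unfolding sorted_wrt_iff_nth_less length_odd_entries
  proof (intro allI impI)
    fix i j assume "i < j" "j < a + 1"
    with odd_decreasing[of i j] show "odd_entries a p ! j < odd_entries a p ! i"
      by (simp add: odd_entries_nth)
  qed
qed

lemma card_odd_entries: "card (set (odd_entries a p)) = a + 1"
  using distinct_desc_list[of "set (odd_entries a p)"] length_odd_entries
  by (simp add: desc_list_odd_entries distinct_card)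

lemma odd_entries_subset: "set (odd_entries a p) \<subseteq> {a+3..n}"
proof
  fix v assume "v \<in> set (odd_entries a p)"
  then obtain j where "j < a + 1" "v = odd_entries a p ! j"
    by (metis in_set_conv_nth length_odd_entries)
  then have j: "j \<le> a" "v = p ! (2*j + 1)"
    by (simp_all add: odd_entries_nth)
  with odd_decreasing[of j a] last_chain_occ(2) head_value have "a + 2 < v"
    by simp
  moreover have "v \<le> n"
    using j p_nth_le n_bound by simp
  ultimately show "v \<in> {a+3..n}"
    by simp
qed

lemma prefix_eq_zigzag: "take (2*a + 2) p = zigzag a (set (odd_entries a p))"
proof (rule nth_equalityI)
  show "length (take (2*a + 2) p) = length (zigzag a (set (odd_entries a p)))"
    using p_length n_bound by simp
next
  fix i assume "i < length (take (2*a + 2) p)"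
  then have i: "i < 2*a + 2"
    by simp
  show "take (2*a + 2) p ! i = zigzag a (set (odd_entries a p)) ! i"
  proof (cases "even i")
    case True
    with i even_value[of "i div 2"] show ?thesis
      by (auto simp: zigzag_nth elim!: evenE)
  next
    case False
    with i odd_entries_nth[of "i div 2"] show ?thesis
      by (auto simp: zigzag_nth desc_list_odd_entries elim!: oddE)
  qed
qed

lemma tail_mem_clusters_on:
  "(drop (2*a + 2) p, {k. k + (2*a + 2) \<in> S}) \<in> clusters_on ({a+2..n} - set (odd_entries a p))"
proof -
  let ?U = "set (odd_entries a p)"
  have "set (take (2*a + 2) p) \<inter> set (drop (2*a + 2) p) = {}"
    "set (take (2*a + 2) p) \<union> set (drop (2*a + 2) p) = {1..n}"
    using p_distinct p_set set_take_disj_set_drop_if_distinct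
    by (metis order_refl, metis append_take_drop_id set_append)
  moreover have "set (take (2*a + 2) p) = {1..a+1} \<union> ?U"
    using prefix_eq_zigzag set_zigzag card_odd_entries by simp
  ultimately have "set (drop (2*a + 2) p) = {1..n} - ({1..a+1} \<union> ?U)"
    by blast
  also have "\<dots> = {a+2..n} - ?U"
    by auto
  finally have "set (drop (2*a + 2) p) = {a+2..n} - ?U" .
  moreover have "length (drop (2*a + 2) p) = 1" if "{k. k + (2*a + 2) \<in> S} = {}"
    using tail_singleton[OF that] p_length by simp
  ultimately show ?thesis
    unfolding clusters_on_def using p_distinct tail_marking by auto
qed

lemma cluster_decomposition:
  "\<exists>U r S'. U \<subseteq> {a+3..n} \<and> card U = a + 1 \<and> (r, S') \<in> clusters_on ({a+2..n} - U) \<and>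
     p = zigzag a U @ r \<and> S = chain_marks a \<union> shift_marks a S'"
  using odd_entries_subset card_odd_entries tail_mem_clusters_on marks_split
    prefix_eq_zigzag[symmetric] append_take_drop_id[of "2*a + 2" p]
  by metis

end

section \<open>The recurrence for the cluster numbers\<close>

definition glue :: "nat \<Rightarrow> nat set \<times> nat list \<times> nat set \<Rightarrow> nat list \<times> nat set" where
  "glue a = (\<lambda>(U, r, S). (zigzag a U @ r, chain_marks a \<union> shift_marks a S))"

definition glue_domain :: "nat \<Rightarrow> nat \<Rightarrow> (nat set \<times> nat list \<times> nat set) set" where
  "glue_domain n a = (SIGMA U:{U. U \<subseteq> {a+3..n} \<and> card U = a + 1}. clusters_on ({a+2..n} - U))"

lemma finite_marks_of_clusters_on: "(r, S) \<in> clusters_on W \<Longrightarrow> finite S"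
  unfolding clusters_on_def using cluster_marking_subset finite_subset by blast

lemma inj_on_glue: "inj_on (glue a) (glue_domain n a)"
proof (rule inj_onI)
  fix x y assume "x \<in> glue_domain n a" "y \<in> glue_domain n a" "glue a x = glue a y"
  moreover obtain U1 r1 S1 U2 r2 S2 where xy: "x = (U1, r1, S1)" "y = (U2, r2, S2)"
    by (cases x, cases y) auto
  ultimately have dom: "(U1, r1, S1) \<in> glue_domain n a" "(U2, r2, S2) \<in> glue_domain n a"
    and "glue a (U1, r1, S1) = glue a (U2, r2, S2)"
    by simp_all
  then have "zigzag a U1 = zigzag a U2" "r1 = r2"
    and marks: "chain_marks a \<union> shift_marks a S1 = chain_marks a \<union> shift_marks a S2"
    by (auto simp: glue_def append_eq_append_conv)
  have recover: "set (zigzag a U) - {1..a+1} = U" if "(U, r, S) \<in> glue_domain n a" for U r S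
  proof -
    have U: "U \<subseteq> {a+3..n}" "card U = a + 1"
      using that by (auto simp: glue_domain_def)
    then have "finite U"
      using finite_subset by blast
    with U have "set (zigzag a U) - {1..a+1} = ({1..a+1} \<union> U) - {1..a+1}"
      by (simp add: set_zigzag)
    also have "\<dots> = U"
      using U(1) by auto
    finally show ?thesis .
  qed
  have "U1 = set (zigzag a U1) - {1..a+1}"
    using recover[OF dom(1)] by (rule sym)
  also have "\<dots> = set (zigzag a U2) - {1..a+1}"
    by (simp only: \<open>zigzag a U1 = zigzag a U2\<close>)
  also have "\<dots> = U2"
    by (rule recover[OF dom(2)])
  finally have "U1 = U2" .
  have "S1 = {k. k + (2*a + 2) \<in> chain_marks a \<union> shift_marks a S1}"
    by (simp only: mem_marks_shift Collect_mem_eq)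
  also have "\<dots> = {k. k + (2*a + 2) \<in> chain_marks a \<union> shift_marks a S2}"
    by (simp only: marks)
  also have "\<dots> = S2"
    by (simp only: mem_marks_shift Collect_mem_eq)
  finally have "S1 = S2" .
  with \<open>U1 = U2\<close> \<open>r1 = r2\<close> xy show "x = y"
    by simp
qed

lemma glue_image:
  assumes "5 \<le> n" "1 \<le> a" "2*a + 3 \<le> n"
  shows "glue a ` glue_domain n a = {(p, S). is_cluster n p S \<and> chain_length S = a}"
proof (intro equalityI subsetI)
  fix x assume "x \<in> glue a ` glue_domain n a"
  then obtain U r S where dom: "(U, r, S) \<in> glue_domain n a" and x: "x = glue a (U, r, S)"
    by auto
  interpret glued_cluster a n U r S
    using assms(2,3) dom by unfold_locales (auto simp: glue_domain_def)
  show "x \<in> {(p, S). is_cluster n p S \<and> chain_length S = a}"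
    unfolding x glue_def using glue_is_cluster chain_length_marks by simp
next
  fix x assume "x \<in> {(p, S). is_cluster n p S \<and> chain_length S = a}"
  then obtain p S where x: "x = (p, S)" "is_cluster n p S" "chain_length S = a"
    by auto
  interpret cluster_split n p S a
    using x(2,3) assms(1) by unfold_locales simp_all
  obtain U r S' where "U \<subseteq> {a+3..n}" "card U = a + 1" "(r, S') \<in> clusters_on ({a+2..n} - U)"
    "p = zigzag a U @ r" "S = chain_marks a \<union> shift_marks a S'"
    using cluster_decomposition by blast
  with x(1) show "x \<in> glue a ` glue_domain n a"
    unfolding glue_domain_def glue_def by (intro image_eqI[of _ _ "(U, r, S')"]) auto
qed

lemma signed_count_glue_fibre:
  assumes "1 \<le> a" "2*a + 3 \<le> n" "U \<subseteq> {a+3..n}" "card U = a + 1"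
  shows "(\<Sum>z\<in>clusters_on ({a+2..n} - U). (-1::int) ^ card (snd (glue a (U, z))))
    = (-1) ^ a * t (n - 2*a - 2)"
proof -
  have "finite U" "U \<subseteq> {a+2..n}"
    using assms(3) finite_subset by auto
  then have "card ({a+2..n} - U) = n - 2*a - 2"
    using assms by (simp add: card_Diff_subset)
  then have "signed_count (clusters_on ({a+2..n} - U)) = t (n - 2*a - 2)"
    using assms by (intro signed_count_clusters_on) auto
  moreover have "(-1::int) ^ card (snd (glue a (U, z))) = (-1) ^ a * (-1) ^ card (snd z)"
    if "z \<in> clusters_on ({a+2..n} - U)" for z
    using that card_marks finite_marks_of_clusters_on
    by (cases z) (simp add: glue_def power_add)
  ultimately show ?thesis
    by (simp add: signed_count_def flip: sum_distrib_left)
qed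

lemma signed_count_chain_length:
  assumes "5 \<le> n" "1 \<le> a" "2*a + 3 \<le> n"
  shows "signed_count {(p, S). is_cluster n p S \<and> chain_length S = a}
    = (-1) ^ a * int (n - a - 2 choose (a + 1)) * t (n - 2*a - 2)"
proof -
  let ?Us = "{U. U \<subseteq> {a+3..n} \<and> card U = a + 1}"
  have bij: "bij_betw (glue a) (glue_domain n a) {(p, S). is_cluster n p S \<and> chain_length S = a}"
    unfolding bij_betw_def using inj_on_glue glue_image[OF assms] by blast
  have "signed_count {(p, S). is_cluster n p S \<and> chain_length S = a}
      = (\<Sum>y\<in>glue_domain n a. (-1::int) ^ card (snd (glue a y)))"
    unfolding signed_count_def by (rule sum.reindex_bij_betw[OF bij, symmetric])
  also have "\<dots> = (\<Sum>(U, z)\<in>glue_domain n a. (-1::int) ^ card (snd (glue a (U, z))))"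
    by (rule sum.cong) auto
  also have "\<dots> = (\<Sum>U\<in>?Us. \<Sum>z\<in>clusters_on ({a+2..n} - U).
      (-1::int) ^ card (snd (glue a (U, z))))"
    unfolding glue_domain_def
    by (rule sum.Sigma[symmetric]) (auto intro: finite_subset[of _ "Pow {a+3..n}"] finite_clusters_on)
  also have "\<dots> = (\<Sum>U\<in>?Us. (-1) ^ a * t (n - 2*a - 2))"
    using signed_count_glue_fibre assms(2,3) by simp
  also have "\<dots> = int (card ?Us) * ((-1) ^ a * t (n - 2*a - 2))"
    by simp
  also have "card ?Us = n - a - 2 choose (a + 1)"
    using n_subsets[of "{a+3..n}" "a + 1"] by simp
  finally show ?thesis
    by simp
qed

theorem t_recurrence:
  assumes "5 \<le> n"
  shows "t n = (\<Sum>a | 1 \<le> a \<and> 2*a + 3 \<le> n.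
    (-1) ^ a * int (n - a - 2 choose (a + 1)) * t (n - 2*a - 2))"
proof -
  let ?C = "{(p, S). is_cluster n p S}"
  have "chain_length (snd x) \<in> {a. 1 \<le> a \<and> 2*a + 3 \<le> n}" if "x \<in> ?C" for x
  proof -
    interpret cluster_split n "fst x" "snd x" "chain_length (snd x)"
      using that assms by unfold_locales auto
    show ?thesis
      using a_pos n_bound by simp
  qed
  then have "signed_count ?C =
      (\<Sum>a | 1 \<le> a \<and> 2*a + 3 \<le> n. signed_count {x \<in> ?C. chain_length (snd x) = a})"
    unfolding signed_count_def using finite_clusters[of n]
    by (intro sum.group[symmetric]) (auto intro: finite_subset[of _ "{..n}"])
  also have "\<dots> = (\<Sum>a | 1 \<le> a \<and> 2*a + 3 \<le> n.
      (-1) ^ a * int (n - a - 2 choose (a + 1)) * t (n - 2*a - 2))"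
  proof (rule sum.cong[OF refl])
    fix a assume "a \<in> {a. 1 \<le> a \<and> 2*a + 3 \<le> n}"
    moreover have "{x \<in> ?C. chain_length (snd x) = a} = {(p, S). is_cluster n p S \<and> chain_length S = a}"
      by auto
    ultimately show "signed_count {x \<in> ?C. chain_length (snd x) = a}
        = (-1) ^ a * int (n - a - 2 choose (a + 1)) * t (n - 2*a - 2)"
      using signed_count_chain_length[OF assms] by simp
  qed
  finally show ?thesis
    using t_eq_signed_count[OF assms] by simp
qed

section \<open>The functional equation\<close>

lemma inverse_one_plus_X2_power_step:
  fixes i :: nat
  defines "u \<equiv> inverse (1 + fps_X^2) :: 'a::field fps"
  shows "fps_nth (u ^ Suc i) m + (if m < 2 then 0 else fps_nth (u ^ Suc i) (m - 2)) = fps_nth (u ^ i) m"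
proof -
  have "u ^ i = u ^ Suc i * (1 + fps_X^2)"
    unfolding u_def by (simp add: power_Suc2 mult.assoc inverse_mult_eq_1)
  also have "\<dots> = u ^ Suc i + fps_X^2 * u ^ Suc i"
    by (simp only: distrib_left mult_1_right mult.commute[of _ "fps_X^2"])
  finally show ?thesis
    by (simp only: fps_add_nth fps_X_power_mult_nth)
qed

lemma inverse_one_plus_X2_power_nth_odd:
  "fps_nth ((inverse (1 + fps_X^2) :: 'a::field fps) ^ i) (2*k + 1) = 0"
proof (induction i arbitrary: k)
  case (Suc i)
  note outer_IH = Suc.IH
  show ?case
  proof (induction k)
    case 0
    then show ?case
      using inverse_one_plus_X2_power_step[where i = i and m = 1 and 'a = 'a] outer_IH[of 0]
      by (simp del: power_Suc)
  next
    case (Suc k)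
    with inverse_one_plus_X2_power_step[where i = i and m = "2*Suc k + 1" and 'a = 'a]
      outer_IH[of "Suc k"] show ?case
      by (simp del: power_Suc)
  qed
qed simp

lemma inverse_one_plus_X2_power_nth_even:
  "fps_nth ((inverse (1 + fps_X^2) :: 'a::field fps) ^ i) (2*k) = (-1)^k * of_nat (i + k - 1 choose k)"
proof (induction i arbitrary: k)
  case 0
  then show ?case
    by (cases k) (auto simp: binomial_eq_0)
next
  case (Suc i)
  note outer_IH = Suc.IH
  show ?case
  proof (induction k)
    case 0
    then show ?case
      using inverse_one_plus_X2_power_step[where i = i and m = 0 and 'a = 'a] outer_IH[of 0]
      by (simp del: power_Suc)
  next
    case (Suc k)
    let ?c = "\<lambda>i m. fps_nth ((inverse (1 + fps_X^2) :: 'a fps) ^ i) m"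
    have "?c (Suc i) (2*Suc k) = ?c i (2*Suc k) - ?c (Suc i) (2*k)"
      using inverse_one_plus_X2_power_step[where i = i and m = "2*Suc k" and 'a = 'a]
      by (simp add: eq_diff_eq del: power_Suc)
    also have "\<dots> = (-1)^Suc k * of_nat (i + k choose Suc k) - (-1)^k * of_nat (i + k choose k)"
      using outer_IH[of "Suc k"] Suc.IH by simp
    also have "\<dots> = (-1)^Suc k * of_nat ((i + k choose k) + (i + k choose Suc k))"
      by (simp add: algebra_simps)
    also have "(i + k choose k) + (i + k choose Suc k) = Suc i + Suc k - 1 choose Suc k"
      by simp
    finally show ?case .
  qed
qed

lemma X_over_one_plus_X2_power_nth:
  "fps_nth ((fps_X / (1 + fps_X^2) :: 'a::field fps) ^ i) n =
     (if n < i then 0 else fps_nth (inverse (1 + fps_X^2) ^ i) (n - i))"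
proof -
  have "fps_X / (1 + fps_X^2) = fps_X * inverse (1 + fps_X^2 :: 'a fps)"
    by (rule fps_divide_unit) simp
  then show ?thesis
    by (simp add: power_mult_distrib fps_X_power_mult_nth)
qed

lemma X_over_one_plus_X2_power_nth_odd:
  assumes "odd (n - i)"
  shows "fps_nth ((fps_X / (1 + fps_X^2) :: 'a::field fps) ^ i) n = 0"
proof -
  obtain k where "n - i = 2*k + 1"
    using assms by (rule oddE)
  with inverse_one_plus_X2_power_nth_odd[of i k, where 'a = 'a] show ?thesis
    by (simp add: X_over_one_plus_X2_power_nth)
qed

lemma X_over_one_plus_X2_power_nth_even:
  assumes "2*b + 1 \<le> n"
  shows "fps_nth ((fps_X / (1 + fps_X^2) :: 'a::field fps) ^ (n - 2*b)) n
    = (-1) ^ b * of_nat (n - b - 1 choose b)"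
proof -
  have "fps_nth ((fps_X / (1 + fps_X^2) :: 'a fps) ^ (n - 2*b)) n
      = fps_nth (inverse (1 + fps_X^2) ^ (n - 2*b)) (2*b)"
    using assms by (simp add: X_over_one_plus_X2_power_nth)
  also have "\<dots> = (-1) ^ b * of_nat (n - 2*b + b - 1 choose b)"
    by (rule inverse_one_plus_X2_power_nth_even)
  also have "n - 2*b + b - 1 = n - b - 1"
    using assms by simp
  finally show ?thesis .
qed

lemma T_nth: "fps_nth T k = (if k = 0 then 1 else of_int (t k))"
  by (simp add: T_def)

lemma t_recurrence_shifted:
  assumes "2 \<le> n"
  shows "t n = - (\<Sum>b | 2 \<le> b \<and> 2*b + 1 \<le> n. (-1) ^ b * int (n - b - 1 choose b) * t (n - 2*b))"
proof (cases "5 \<le> n")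
  case True
  have range: "Suc ` {a. 1 \<le> a \<and> 2*a + 3 \<le> n} = {b. 2 \<le> b \<and> 2*b + 1 \<le> n}"
  proof (intro equalityI subsetI)
    fix b assume "b \<in> {b. 2 \<le> b \<and> 2*b + 1 \<le> n}"
    then have "b - 1 \<in> {a. 1 \<le> a \<and> 2*a + 3 \<le> n}" "b = Suc (b - 1)"
      by auto
    then show "b \<in> Suc ` {a. 1 \<le> a \<and> 2*a + 3 \<le> n}"
      by blast
  qed auto
  have "(\<Sum>b | 2 \<le> b \<and> 2*b + 1 \<le> n. (-1) ^ b * int (n - b - 1 choose b) * t (n - 2*b))
      = (\<Sum>a | 1 \<le> a \<and> 2*a + 3 \<le> n.
          (-1) ^ Suc a * int (n - Suc a - 1 choose Suc a) * t (n - 2 * Suc a))"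
    unfolding range[symmetric] by (simp add: sum.reindex)
  also have "\<dots> = - t n"
    using t_recurrence[OF True] by (simp add: sum_negf numeral_eq_Suc)
  finally show ?thesis
    by simp
next
  case False
  then have "{b. 2 \<le> b \<and> 2*b + 1 \<le> n} = {}"
    by auto
  with False assms show ?thesis
    by (simp add: t_small)
qed

lemma T_compose_nth:
  assumes "1 \<le> n"
  shows "fps_nth (fps_compose T (fps_X / (1 + fps_X^2))) n
    = (\<Sum>b | 2*b + 1 \<le> n. (-1) ^ b * of_nat (n - b - 1 choose b) * of_int (t (n - 2*b)))"
proof -
  let ?B = "{b. 2*b + 1 \<le> n}"
  let ?f = "\<lambda>i. fps_nth T i * fps_nth ((fps_X / (1 + fps_X^2)) ^ i) n"
  have vanish: "?f i = 0" if "i \<in> {0..n} - (\<lambda>b. n - 2*b) ` ?B" for i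
  proof (cases "i = 0")
    case False
    have "odd (n - i)"
    proof
      assume "even (n - i)"
      then obtain b where "n - i = 2*b"
        by (rule evenE)
      with that False have "b \<in> ?B" "i = n - 2*b"
        by auto
      with that show False
        by blast
    qed
    then show ?thesis
      by (simp add: X_over_one_plus_X2_power_nth_odd)
  qed (use assms in simp)
  have "fps_nth (fps_compose T (fps_X / (1 + fps_X^2))) n = sum ?f {0..n}"
    by (simp add: fps_compose_nth)
  also have "\<dots> = sum ?f ((\<lambda>b. n - 2*b) ` ?B)"
    by (rule sum.mono_neutral_right) (use vanish in auto)
  also have "\<dots> = sum (\<lambda>b. ?f (n - 2*b)) ?B"
    by (rule sum.reindex_cong[of "\<lambda>b. n - 2*b"]) (auto simp: inj_on_def)
  also have "\<dots> = (\<Sum>b\<in>?B. (-1) ^ b * of_nat (n - b - 1 choose b) * of_int (t (n - 2*b)))"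
    by (rule sum.cong) (auto simp: T_nth X_over_one_plus_X2_power_nth_even)
  finally show ?thesis .
qed

lemma T_compose_nth_1: "fps_nth (fps_compose T (fps_X / (1 + fps_X^2))) 1 = 1"
proof -
  have "{b. 2*b + 1 \<le> (1::nat)} = {0}"
    by auto
  then show ?thesis
    by (simp add: T_compose_nth t_small)
qed

lemma T_compose_nth_ge_2:
  assumes "2 \<le> n"
  shows "fps_nth (fps_compose T (fps_X / (1 + fps_X^2))) n = - (real n - 2) * of_int (t (n - 2))"
proof (cases "n = 2")
  case True
  have "{b. 2*b + 1 \<le> (2::nat)} = {0}"
    by auto
  with True show ?thesis
    by (simp add: T_compose_nth t_small)
next
  case False
  let ?h = "\<lambda>b. (-1) ^ b * real (n - b - 1 choose b) * of_int (t (n - 2*b))"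
  let ?B = "{b. 2 \<le> b \<and> 2*b + 1 \<le> n}"
  have "{b. 2*b + 1 \<le> n} = insert 0 (insert 1 ?B)"
    using assms False by auto
  moreover have "finite ?B"
    by (rule finite_subset[of _ "{..n}"]) auto
  ultimately have "fps_nth (fps_compose T (fps_X / (1 + fps_X^2))) n = ?h 0 + ?h 1 + sum ?h ?B"
    using assms by (simp add: T_compose_nth)
  moreover have "sum ?h ?B = - of_int (t n)"
    using t_recurrence_shifted[OF assms] by simp
  moreover have "real (n - 1 - 1 choose 1) = real n - 2"
    using assms by simp
  ultimately show ?thesis
    by (simp add: numeral_eq_Suc)
qed

lemma X3_deriv_T_nth:
  assumes "2 \<le> n"
  shows "fps_nth (fps_X^3 * fps_deriv T) n = (real n - 2) * of_int (t (n - 2))"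
proof (cases "n = 2")
  case False
  with assms have "n - 3 + 1 = n - 2" "n - 2 \<noteq> 0" "3 \<le> n"
    by auto
  then show ?thesis
    by (simp add: fps_X_power_mult_nth T_nth of_nat_diff)
qed (simp add: fps_X_power_mult_nth)

theorem theorem3p8:
  shows "fps_X ^ 3 * fps_deriv T = 1 + fps_X - fps_compose T (fps_X / (1 + fps_X ^ 2))
         \<and> fps_nth T 0 = 1"
proof
  show "fps_X ^ 3 * fps_deriv T = 1 + fps_X - fps_compose T (fps_X / (1 + fps_X ^ 2))"
  proof (rule fps_ext)
    fix n :: nat
    consider "n = 0" | "n = 1" | "2 \<le> n"
      by linarith
    then show "fps_nth (fps_X ^ 3 * fps_deriv T) n
        = fps_nth (1 + fps_X - fps_compose T (fps_X / (1 + fps_X ^ 2))) n"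
    proof cases
      case 3
      then show ?thesis
        by (simp add: X3_deriv_T_nth T_compose_nth_ge_2) (simp add: algebra_simps)
    qed (use T_compose_nth_1 in \<open>simp_all add: fps_X_power_mult_nth T_nth\<close>)
  qed
  show "fps_nth T 0 = 1"
    by (simp add: T_nth)
qed

end
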